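(* Let $C:\mathbb{R}^n\to\mathbb{R}$ be convex, increasing and $\mathbf 1$-invariant with $C(\vec 0)>0$, and define $\varphi:\mathbb{R}^n_{>0}\to\mathbb{R}$ by $\varphi(\vec q)=\alpha$, where $\alpha>0$ is the unique positive number with $C(-\vec q/\alpha)=0$. Then $\varphi$ is 1-homogeneous, concave and increasing.
   Context: $\mathbf 1=(1,\dots,1)$. $C$ is $\mathbf 1$-invariant if $C(\vec q+\alpha\mathbf 1)=C(\vec q)+\alpha$ for all $\vec q,\alpha$; a function is increasing if $f(\vec q)>f(\vec q')$ whenever $\vec q\succeq\vec q'$ coordinatewise and $\vec q\neq\vec q'$ (both in its domain). $\mathbb{R}^n_{>0}$ is the set of vectors with all coordinates strictly positive. A function $f$ on $\mathbb{R}^n_{>0}$ is 1-homogeneous if $f(\alpha\vec q)=\alpha f(\vec q)$ for all $\vec q\in\mathbb{R}^n_{>0}$ and $\alpha>0$. (The existence and uniqueness of such $\alpha$ for every $\vec q\in\mathbb{R}^n_{>0}$ holds under these hypotheses.) *)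

theory Defs
  imports "HOL-Analysis.Analysis"
begin

definition ones :: "real ^ 'n" where
  "ones = (\<chi> i. 1)"

definition vge :: "real ^ 'n \<Rightarrow> real ^ 'n \<Rightarrow> bool" where
  "vge q q' \<longleftrightarrow> (\<forall>i. q $ i \<ge> q' $ i)"

definition increasing_on :: "(real ^ 'n) set \<Rightarrow> (real ^ 'n \<Rightarrow> real) \<Rightarrow> bool" where
  "increasing_on D f \<longleftrightarrow>
     (\<forall>q\<in>D. \<forall>q'\<in>D. vge q q' \<and> q \<noteq> q' \<longrightarrow> f q > f q')"

definition one_invariant :: "(real ^ 'n \<Rightarrow> real) \<Rightarrow> bool" where
  "one_invariant C \<longleftrightarrow> (\<forall>q a. C (q + a *\<^sub>R ones) = C q + a)"

definition pos_orthant :: "(real ^ 'n) set" where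
  "pos_orthant = {q. \<forall>i. q $ i > 0}"

definition homogeneous1_on :: "(real ^ 'n) set \<Rightarrow> (real ^ 'n \<Rightarrow> real) \<Rightarrow> bool" where
  "homogeneous1_on D f \<longleftrightarrow> (\<forall>q\<in>D. \<forall>a>0. f (a *\<^sub>R q) = a * f q)"

definition phi :: "(real ^ 'n \<Rightarrow> real) \<Rightarrow> real ^ 'n \<Rightarrow> real" where
  "phi C q = (THE a. a > 0 \<and> C (- ((1 / a) *\<^sub>R q)) = 0)"

end

theory Submission
  imports Defs
begin

text \<open>For \<open>s\<close> in the positive orthant the function \<open>a \<mapsto> C (-s/a)\<close> is strictly increasing
  on \<open>a > 0\<close>, positive for large \<open>a\<close> and nonpositive for small \<open>a\<close> (by \<open>\<one>\<close>-invariance), so its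
  unique zero \<open>\<phi> s\<close> exists and \<open>a \<le> \<phi> s \<longleftrightarrow> C (-s/a) \<le> 0\<close>. Homogeneity follows from
  \<open>C (-(t s)/(t a)) = C (-s/a)\<close>, monotonicity from that of \<open>C\<close>, and concavity from convexity
  of \<open>C\<close>: \<open>-(u q + v r)/(u a + v b)\<close> is a convex combination of \<open>-q/a\<close> and \<open>-r/b\<close>, so with
  \<open>a = \<phi> q\<close>, \<open>b = \<phi> r\<close> the value of \<open>C\<close> there is \<open>\<le> 0\<close>.\<close>

lemma convex_combination_pos:
  fixes x y u v :: real
  assumes "0 < x" "0 < y" "0 \<le> u" "0 \<le> v" "u + v = 1"
  shows "0 < u * x + v * y"
  using convex_bound_lt[of "- x" 0 "- y" u v] assms by simp

lemma convex_pos_orthant: "convex pos_orthant"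
  unfolding convex_def pos_orthant_def by (simp add: convex_combination_pos)

lemma increasing_on_UNIV_imp_le:
  assumes "increasing_on UNIV C" "vge q q'"
  shows "C q' \<le> C q"
  using assms unfolding increasing_on_def by (cases "q = q'") force+

lemma increasing_on_UNIV_ray_less:
  fixes C :: "real ^ 'n \<Rightarrow> real"
  assumes inc: "increasing_on UNIV C" and s: "s \<in> pos_orthant" and "0 < a" "a < b"
  shows "C (- ((1 / a) *\<^sub>R s)) < C (- ((1 / b) *\<^sub>R s))"
proof -
  have less: "s $ i / b < s $ i / a" for i
    using s \<open>0 < a\<close> \<open>a < b\<close> by (simp add: pos_orthant_def divide_strict_left_mono)
  then have "vge (- ((1 / b) *\<^sub>R s)) (- ((1 / a) *\<^sub>R s))"
    by (simp add: vge_def less_imp_le)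
  moreover have "- ((1 / b) *\<^sub>R s) \<noteq> - ((1 / a) *\<^sub>R s)"
  proof
    fix i
    assume "- ((1 / b) *\<^sub>R s) = - ((1 / a) *\<^sub>R s)"
    then have "s $ i / b = s $ i / a"
      by (auto simp: vec_eq_iff)
    with less[of i] show False
      by simp
  qed
  ultimately show ?thesis
    using inc unfolding increasing_on_def by blast
qed

lemma increasing_on_UNIV_ray_less_iff:
  fixes C :: "real ^ 'n \<Rightarrow> real"
  assumes "increasing_on UNIV C" "s \<in> pos_orthant" "0 < a" "0 < b"
  shows "C (- ((1 / a) *\<^sub>R s)) < C (- ((1 / b) *\<^sub>R s)) \<longleftrightarrow> a < b"
  using increasing_on_UNIV_ray_less[OF assms(1,2)] assms(3,4)
  by (metis less_asym linorder_neqE_linordered_idom)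

locale cost_function =
  fixes C :: "real ^ 'n \<Rightarrow> real"
  assumes convex: "convex_on UNIV C"
    and increasing: "increasing_on UNIV C"
    and translation: "one_invariant C"
    and pos_at_zero: "C 0 > 0"
begin

lemma root_exists:
  assumes s: "s \<in> pos_orthant"
  shows "\<exists>a>0. C (- ((1 / a) *\<^sub>R s)) = 0"
proof -
  define m where "m = Min (range (\<lambda>i. s $ i))"
  have m_le: "m \<le> s $ i" for i
    unfolding m_def by (rule Min_le) auto
  have "m \<in> range (\<lambda>i. s $ i)"
    unfolding m_def by (rule Min_in) auto
  then have "m > 0"
    using s by (auto simp: pos_orthant_def)
  define T where "T = C 0 / m"
  have "T > 0"
    using pos_at_zero \<open>m > 0\<close> by (simp add: T_def)
  have "vge ((- (T * m)) *\<^sub>R ones) (- (T *\<^sub>R s))"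
    using m_le \<open>T > 0\<close> by (simp add: vge_def ones_def mult_left_mono)
  then have "C (- (T *\<^sub>R s)) \<le> C (0 + (- (T * m)) *\<^sub>R ones)"
    using increasing_on_UNIV_imp_le[OF increasing] by simp
  also have "\<dots> = C 0 + - (T * m)"
    using translation unfolding one_invariant_def by blast
  also have "\<dots> = 0"
    using \<open>m > 0\<close> unfolding T_def by simp
  finally have "C (- (T *\<^sub>R s)) \<le> 0" .
  moreover have "continuous_on {0..T} (\<lambda>t. C (- (t *\<^sub>R s)))"
    using convex_on_continuous[OF open_UNIV convex]
    by (rule continuous_on_compose2) (intro continuous_intros, auto)
  ultimately obtain t where t: "0 \<le> t" "C (- (t *\<^sub>R s)) = 0"
    using IVT2'[of "\<lambda>t. C (- (t *\<^sub>R s))" T 0 0] \<open>T > 0\<close> pos_at_zero by auto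
  then have "t > 0"
    using pos_at_zero by (cases "t = 0") auto
  with t show ?thesis
    by (intro exI[of _ "1 / t"]) simp
qed

lemma ex1_root:
  assumes "s \<in> pos_orthant"
  shows "\<exists>!a. a > 0 \<and> C (- ((1 / a) *\<^sub>R s)) = 0"
  using root_exists[OF assms] increasing_on_UNIV_ray_less[OF increasing assms]
  by (metis less_irrefl linorder_neqE_linordered_idom)

lemma phi_pos_root:
  assumes "s \<in> pos_orthant"
  shows "phi C s > 0" "C (- ((1 / phi C s) *\<^sub>R s)) = 0"
  using theI'[OF ex1_root[OF assms]] by (simp_all add: phi_def)

lemma phi_eqI:
  assumes "s \<in> pos_orthant" "a > 0" "C (- ((1 / a) *\<^sub>R s)) = 0"
  shows "phi C s = a"
  unfolding phi_def using assms by (intro the1_equality ex1_root) auto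

lemma phi_less_iff:
  assumes "s \<in> pos_orthant" "a > 0"
  shows "C (- ((1 / a) *\<^sub>R s)) < 0 \<longleftrightarrow> a < phi C s"
  using increasing_on_UNIV_ray_less_iff[OF increasing assms(1,2) phi_pos_root(1)[OF assms(1)]]
  by (simp add: phi_pos_root(2)[OF assms(1)])

lemma phi_le_iff:
  assumes "s \<in> pos_orthant" "a > 0"
  shows "C (- ((1 / a) *\<^sub>R s)) \<le> 0 \<longleftrightarrow> a \<le> phi C s"
  using increasing_on_UNIV_ray_less_iff[OF increasing assms(1) phi_pos_root(1)[OF assms(1)] assms(2)]
  by (simp add: phi_pos_root(2)[OF assms(1)]) (metis not_less)

lemma phi_homogeneous: "homogeneous1_on pos_orthant (phi C)"
  unfolding homogeneous1_on_def
proof (intro ballI allI impI)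
  fix q :: "real ^ 'n" and a :: real
  assume q: "q \<in> pos_orthant" and "a > 0"
  then have "a *\<^sub>R q \<in> pos_orthant"
    by (simp add: pos_orthant_def)
  then show "phi C (a *\<^sub>R q) = a * phi C q"
    using phi_pos_root[OF q] \<open>a > 0\<close> by (intro phi_eqI) simp_all
qed

lemma phi_concave: "concave_on pos_orthant (phi C)"
  unfolding concave_on_iff
proof (intro conjI ballI allI impI convex_pos_orthant)
  fix q r :: "real ^ 'n" and u v :: real
  assume q: "q \<in> pos_orthant" and r: "r \<in> pos_orthant"
    and "u \<ge> 0" "v \<ge> 0" "u + v = 1"
  define a b where "a = phi C q" and "b = phi C r"
  have a: "a > 0" "C (- ((1 / a) *\<^sub>R q)) = 0" and b: "b > 0" "C (- ((1 / b) *\<^sub>R r)) = 0"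
    using phi_pos_root[OF q] phi_pos_root[OF r] by (simp_all add: a_def b_def)
  define c where "c = u * a + v * b"
  have "c > 0"
    using convex_combination_pos a(1) b(1) \<open>u \<ge> 0\<close> \<open>v \<ge> 0\<close> \<open>u + v = 1\<close>
    by (simp add: c_def)
  have weights: "0 \<le> v * b / c" "v * b / c \<le> 1" "1 - v * b / c = u * a / c"
    using \<open>c > 0\<close> a(1) b(1) \<open>u \<ge> 0\<close> \<open>v \<ge> 0\<close> \<open>u + v = 1\<close>
    by (simp_all add: c_def field_simps)
  have combination: "- ((1 / c) *\<^sub>R (u *\<^sub>R q + v *\<^sub>R r))
      = (u * a / c) *\<^sub>R (- ((1 / a) *\<^sub>R q)) + (v * b / c) *\<^sub>R (- ((1 / b) *\<^sub>R r))"
    using a(1) b(1) \<open>c > 0\<close> \<open>u + v = 1\<close> unfolding vec_eq_iff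
    by (simp add: c_def field_simps)
  have "C (- ((1 / c) *\<^sub>R (u *\<^sub>R q + v *\<^sub>R r)))
      \<le> (u * a / c) * C (- ((1 / a) *\<^sub>R q)) + (v * b / c) * C (- ((1 / b) *\<^sub>R r))"
    unfolding combination
    using convex_onD[OF convex weights(1,2) UNIV_I UNIV_I, unfolded weights(3)] .
  also have "\<dots> = 0"
    using a b by simp
  finally have "c \<le> phi C (u *\<^sub>R q + v *\<^sub>R r)"
    using phi_le_iff convexD[OF convex_pos_orthant q r] \<open>c > 0\<close> \<open>u \<ge> 0\<close> \<open>v \<ge> 0\<close> \<open>u + v = 1\<close>
    by blast
  then show "u * phi C q + v * phi C r \<le> phi C (u *\<^sub>R q + v *\<^sub>R r)"
    by (simp add: c_def a_def b_def)
qed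

lemma phi_increasing: "increasing_on pos_orthant (phi C)"
  unfolding increasing_on_def
proof (intro ballI impI)
  fix q r :: "real ^ 'n"
  assume q: "q \<in> pos_orthant" and r: "r \<in> pos_orthant" and "vge q r \<and> q \<noteq> r"
  define p where "p = phi C r"
  have p: "p > 0" "C (- ((1 / p) *\<^sub>R r)) = 0"
    using phi_pos_root[OF r] by (simp_all add: p_def)
  have "vge (- ((1 / p) *\<^sub>R r)) (- ((1 / p) *\<^sub>R q))"
    using \<open>vge q r \<and> q \<noteq> r\<close> p(1) by (simp add: vge_def divide_right_mono)
  moreover have "- ((1 / p) *\<^sub>R r) \<noteq> - ((1 / p) *\<^sub>R q)"
    using \<open>vge q r \<and> q \<noteq> r\<close> p(1) by auto
  ultimately have "C (- ((1 / p) *\<^sub>R q)) < 0"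
    using increasing p(2) unfolding increasing_on_def by fastforce
  then show "phi C r < phi C q"
    using phi_less_iff[OF q p(1)] by (simp add: p_def)
qed

end

theorem lemma4p4:
  fixes C :: "real ^ 'n \<Rightarrow> real"
  assumes "convex_on UNIV C"
    and "increasing_on UNIV C"
    and "one_invariant C"
    and "C 0 > 0"
  shows "homogeneous1_on pos_orthant (phi C)
     \<and> concave_on pos_orthant (phi C)
     \<and> increasing_on pos_orthant (phi C)"
proof -
  interpret cost_function C
    using assms by unfold_locales
  show ?thesis
    using phi_homogeneous phi_concave phi_increasing by blast
qed

end
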